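(* Let $\mu_1<\mu_2$ and $\sigma>0$ be real numbers, put $\theta^*=\frac{\mu_1+\mu_2}{2}$ and $x=\frac{\mu_2-\mu_1}{2\sigma}>0$. For $\theta\in\mathbb{R}$ let $\Delta=\theta-\theta^*$, and let $\pi_+(\theta)=\frac{e^{\Delta(\mu_2-\mu_1)/\sigma^2}}{1+e^{\Delta(\mu_2-\mu_1)/\sigma^2}}$ and $\pi_-(\theta)=1-\pi_+(\theta)$. Let $Q_\theta$ be the law of $X$ where $P(Y=+1)=\pi_+(\theta)$, $P(Y=-1)=\pi_-(\theta)$, $X\mid Y=+1\sim\mathcal N(\mu_1,\sigma^2)$ and $X\mid Y=-1\sim\mathcal N(\mu_2,\sigma^2)$. (Thus $\theta$ is exactly the Bayes-optimal decision threshold $\theta^*+\frac{\sigma^2}{\mu_2-\mu_1}\log\frac{\pi_+(\theta)}{\pi_-(\theta)}$ for $Q_\theta$.) Define $$\hat\mu_L(\theta)=\mathbb E_{Q_\theta}[X\mid X<\theta],\qquad \hat\mu_R(\theta)=\mathbb E_{Q_\theta}[X\mid X>\theta],\qquad g(\theta)=\frac{\hat\mu_L(\theta)+\hat\mu_R(\theta)}{2}.$$ Then $g(\theta^* )=\theta^*$, $g$ is differentiable at $\theta^*$, and $$g'(\theta^* )=C(x):=\bigl(2\varphi(x)+2x\Phi(x)\bigr)\bigl(2\varphi(x)-2x\Phi(-x)\bigr)=4\Bigl(\varphi(x)^2+\varphi(x)\,x\,(2\Phi(x)-1)-x^2\Phi(x)(1-\Phi(x))\Bigr),$$ which satisfies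 $0<C(x)\le \frac{2}{\pi}<1$ for all $x\ge 0$, with maximum value $\frac{2}{\pi}$ attained at $x=0$. Consequently, for every $c\in(2/\pi,1)$ there is $\delta>0$ such that $|\theta-\theta^*|<\delta$ implies $|g(\theta)-\theta^*|\le c\,|\theta-\theta^*|$; i.e. the iteration $\hat\theta_{t+1}=g(\hat\theta_t)$ converges linearly to $\theta^*$ once $\hat\theta_t$ is sufficiently close to $\theta^*$, with asymptotic rate at most $2/\pi$.
   Context: $\Phi$ denotes the standard normal cumulative distribution function and $\varphi(u)=\frac{1}{\sqrt{2\pi}}e^{-u^2/2}$ its density. The map $g$ models one step of balanced sampling with pseudo-labels: given the current decision boundary $\hat\theta_t$ (which is biased by the label imbalance $\pi_+/\pi_-$ of the current sample), the data are split by $\hat\theta_t$ into two pseudo-classes, the mean of each pseudo-class is estimated, and the new boundary $\hat\theta_{t+1}$ is the midpoint of these two estimated means. The paper phrases the result as: if $|\hat\theta_T-\theta^*|\ll|\mu_2-\mu_1|$ and $|(\hat\theta_T-\theta^* )(\mu_2-\mu_1)|\ll\sigma^2$, then $|\hat\theta_{t+1}-\theta^*|\le C|\hat\theta_t-\theta^*|$ for $t\ge T$ with $C=2/\pi$, understood to first order in $\hat\theta_t-\theta^*$. *)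

theory Defs
  imports "HOL-Probability.Probability"
begin

definition phi :: "real \<Rightarrow> real" where
  "phi u = std_normal_density u"

definition Phi :: "real \<Rightarrow> real" where
  "Phi u = measure (density lborel (\<lambda>t. ennreal (std_normal_density t))) {..u}"

definition theta_star :: "real \<Rightarrow> real \<Rightarrow> real" where
  "theta_star mu1 mu2 = (mu1 + mu2) / 2"

definition pi_plus :: "real \<Rightarrow> real \<Rightarrow> real \<Rightarrow> real \<Rightarrow> real" where
  "pi_plus mu1 mu2 sg theta =
     (let e = exp ((theta - theta_star mu1 mu2) * (mu2 - mu1) / sg\<^sup>2) in e / (1 + e))"

definition pi_minus :: "real \<Rightarrow> real \<Rightarrow> real \<Rightarrow> real \<Rightarrow> real" where
  "pi_minus mu1 mu2 sg theta = 1 - pi_plus mu1 mu2 sg theta"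

definition Q :: "real \<Rightarrow> real \<Rightarrow> real \<Rightarrow> real \<Rightarrow> real measure" where
  "Q mu1 mu2 sg theta = density lborel (\<lambda>t. ennreal
      (pi_plus mu1 mu2 sg theta * normal_density mu1 sg t
       + pi_minus mu1 mu2 sg theta * normal_density mu2 sg t))"

definition muL :: "real \<Rightarrow> real \<Rightarrow> real \<Rightarrow> real \<Rightarrow> real" where
  "muL mu1 mu2 sg theta =
     (set_lebesgue_integral (Q mu1 mu2 sg theta) {..<theta} (\<lambda>t. t))
       / measure (Q mu1 mu2 sg theta) {..<theta}"

definition muR :: "real \<Rightarrow> real \<Rightarrow> real \<Rightarrow> real \<Rightarrow> real" where
  "muR mu1 mu2 sg theta =
     (set_lebesgue_integral (Q mu1 mu2 sg theta) {theta<..} (\<lambda>t. t))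
       / measure (Q mu1 mu2 sg theta) {theta<..}"

definition g :: "real \<Rightarrow> real \<Rightarrow> real \<Rightarrow> real \<Rightarrow> real" where
  "g mu1 mu2 sg theta = (muL mu1 mu2 sg theta + muR mu1 mu2 sg theta) / 2"

definition C :: "real \<Rightarrow> real" where
  "C x = (2 * phi x + 2 * x * Phi x) * (2 * phi x - 2 * x * Phi (-x))"

end

theory Submission
  imports Defs "HOL-Real_Asymp.Real_Asymp"
begin

text \<open>
  For the normal law N(m, s^2) the mass and the first moment of the half-line below theta are
  Phi z and m Phi z - s phi z, where z = (theta - m) / s. Hence the two conditional means of
  Q_theta, and with them g, are explicit smooth functions of theta built from Phi, phi and
  pi_plus. At theta* we have pi_plus = 1/2 and Phi (-x) = 1 - Phi x, so Q_theta* gives mass 1/2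
  to each side of theta*, and differentiating yields
  g'(theta*) = (2 phi x + x (2 Phi x - 1))^2 - x^2, which factors as C x.

  The second factor of C x is 2 E[(Z - x)^+] > 0 for a standard normal Z, so C x > 0.
  For C y <= C 0 = 2/pi one shows C' <= 0 on [0, oo), i.e.
  phi y (2 Phi y - 1) <= 2 y Phi y (1 - Phi y): near 0 from Phi y - 1/2 <= phi 0 y and
  exp (-y^2/2) <= 1 / (1 + y^2/2), away from 0 from the Mills-ratio bound
  y phi y <= (1 + y^2) (1 - Phi y). The local contraction is then just the definition of the
  derivative of g at its fixed point theta*.
\<close>

section \<open>Integrals over half-lines\<close>

lemma has_real_derivative_integral_atMost:
  fixes f :: "real \<Rightarrow> real"
  assumes cont: "continuous_on UNIV f" and int: "integrable lborel f"
  shows "((\<lambda>y. \<integral>t. indicator {..y} t * f t \<partial>lborel) has_real_derivative f x) (at x)"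
proof -
  define a where "a = x - 1"
  define b where "b = x + 1"
  define K where "K = (\<integral>t. indicator {..<a} t * f t \<partial>lborel)"
  have int_indicator: "integrable lborel (\<lambda>t. indicator A t * f t)" if "A \<in> sets borel" for A
    using integrable_mult_indicator[OF _ int, of A] that by simp
  have near_x: "(\<integral>t. indicator {..u} t * f t \<partial>lborel) = K + integral {a..u} f"
    if "u \<in> {a<..<b}" for u
  proof -
    have "(\<lambda>t. indicator {..u} t * f t) = (\<lambda>t. indicator {..<a} t * f t + indicator {a..u} t * f t)"
      using that by (auto simp: fun_eq_iff split: split_indicator)
    then have "(\<integral>t. indicator {..u} t * f t \<partial>lborel) = K + (\<integral>t. indicator {a..u} t * f t \<partial>lborel)"
      unfolding K_def by (simp add: Bochner_Integration.integral_add int_indicator)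
    also have "(\<integral>t. indicator {a..u} t * f t \<partial>lborel) = integral {a..u} f"
      using set_borel_integral_eq_integral(2)[of "{a..u}" f] int_indicator[of "{a..u}"]
      by (simp add: set_integrable_def set_lebesgue_integral_def)
    finally show ?thesis .
  qed
  have "((\<lambda>u. K + integral {a..u} f) has_real_derivative f x) (at x within {a..b})"
    using integral_has_real_derivative[of a b f x] cont
    by (auto intro!: derivative_eq_intros continuous_on_subset simp: a_def b_def)
  moreover have "x \<in> interior {a..b}"
    by (simp add: a_def b_def)
  ultimately have "((\<lambda>u. K + integral {a..u} f) has_real_derivative f x) (at x)"
    by (metis at_within_interior)
  then show ?thesis
    by (rule has_field_derivative_transform_within_open[of _ _ _ "{a<..<b}"])
       (auto simp: a_def b_def near_x)
qed

lemma integral_atMost_eq_antiderivative: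
  fixes f F :: "real \<Rightarrow> real"
  assumes cont: "continuous_on UNIV f" and int: "integrable lborel f"
    and F: "\<And>x. (F has_real_derivative f x) (at x)"
    and lim: "(F \<longlongrightarrow> (\<integral>t. f t \<partial>lborel)) at_top"
  shows "(\<integral>t. indicator {..y} t * f t \<partial>lborel) = F y"
proof -
  let ?G = "\<lambda>y. \<integral>t. indicator {..y} t * f t \<partial>lborel"
  have "((\<lambda>y. F y - ?G y) has_real_derivative 0) (at x)" for x
    using DERIV_diff[OF F has_real_derivative_integral_atMost[OF cont int]] by simp
  then have "(\<lambda>z. F z - ?G z) = (\<lambda>_. F y - ?G y)"
    using DERIV_isconst_all[of "\<lambda>y. F y - ?G y"] by blast
  moreover have "((\<lambda>z. F z - ?G z) \<longlongrightarrow> 0) at_top"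
    using tendsto_diff[OF lim tendsto_integral_at_top[OF sets_lborel int]] by simp
  ultimately have "((\<lambda>z::real. F y - ?G y) \<longlongrightarrow> 0) at_top"
    by simp
  then show ?thesis
    by (simp add: tendsto_const_iff)
qed

lemma tendsto_integral_atMost_at_bot:
  fixes f :: "real \<Rightarrow> real"
  assumes f: "integrable lborel f"
  shows "((\<lambda>y. \<integral>t. indicator {..y} t * f t \<partial>lborel) \<longlongrightarrow> 0) at_bot"
proof (rule tendsto_at_botI_sequentially)
  fix X :: "nat \<Rightarrow> real"
  assume X: "filterlim X at_bot sequentially"
  have [measurable]: "f \<in> borel_measurable borel"
    using f by auto
  have lim: "AE t in lborel. (\<lambda>n. indicator {..X n} t * f t) \<longlonglongrightarrow> 0"
  proof
    fix t
    from X have "eventually (\<lambda>n. X n < t) sequentially"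
      by (simp add: filterlim_at_bot_dense)
    then show "(\<lambda>n. indicator {..X n} t * f t) \<longlonglongrightarrow> 0"
      by (intro tendsto_eventually) (auto elim!: eventually_mono split: split_indicator)
  qed
  have bound: "AE t in lborel. norm (indicator {..X n} t * f t) \<le> norm (f t)" for n
    by (auto split: split_indicator)
  show "(\<lambda>n. \<integral>t. indicator {..X n} t * f t \<partial>lborel) \<longlonglongrightarrow> 0"
    using integral_dominated_convergence[where w="\<lambda>t. norm (f t)" and M=lborel
        and s="\<lambda>n t. indicator {..X n} t * f t" and f="\<lambda>t. 0"] f lim bound
    by simp
qed

lemma integral_lessThan_eq_integral_atMost:
  fixes f :: "real \<Rightarrow> real"
  assumes "f \<in> borel_measurable borel"
  shows "(\<integral>t. indicator {..<y} t * f t \<partial>lborel) = (\<integral>t. indicator {..y} t * f t \<partial>lborel)"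
proof (rule integral_cong_AE)
  show "AE t in lborel. indicator {..<y} t * f t = indicator {..y} t * f t"
    using AE_lborel_singleton[of y] by eventually_elim (auto split: split_indicator)
qed (use assms in auto)

lemma integral_greaterThan_eq_diff_integral_atMost:
  fixes f :: "real \<Rightarrow> real"
  assumes int: "integrable lborel f"
  shows "(\<integral>t. indicator {y<..} t * f t \<partial>lborel)
    = (\<integral>t. f t \<partial>lborel) - (\<integral>t. indicator {..y} t * f t \<partial>lborel)"
proof -
  have "(\<integral>t. f t \<partial>lborel)
      = (\<integral>t. indicator {..y} t * f t + indicator {y<..} t * f t \<partial>lborel)"
    by (intro Bochner_Integration.integral_cong) (auto split: split_indicator)
  also have "\<dots> = (\<integral>t. indicator {..y} t * f t \<partial>lborel) + (\<integral>t. indicator {y<..} t * f t \<partial>lborel)"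
    using integrable_mult_indicator[OF _ int] by (intro Bochner_Integration.integral_add) auto
  finally show ?thesis by simp
qed

lemma measure_density_eq_integral_indicator:
  fixes h :: "real \<Rightarrow> real"
  assumes [measurable]: "h \<in> borel_measurable borel" "A \<in> sets borel"
    and nonneg: "\<And>t. 0 \<le> h t" and int: "integrable lborel h"
  shows "measure (density lborel (\<lambda>t. ennreal (h t))) A = (\<integral>t. indicator A t * h t \<partial>lborel)"
proof -
  have "emeasure (density lborel (\<lambda>t. ennreal (h t))) A
      = (\<integral>\<^sup>+t. ennreal (indicator A t * h t) \<partial>lborel)"
    by (subst emeasure_density) (auto intro!: nn_integral_cong split: split_indicator)
  also have "\<dots> = ennreal (\<integral>t. indicator A t * h t \<partial>lborel)"
    using integrable_mult_indicator[OF _ int] nonneg by (intro nn_integral_eq_integral) auto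
  finally show ?thesis
    using nonneg by (simp add: measure_def integral_nonneg_AE)
qed

lemma set_integral_ident_density:
  fixes h :: "real \<Rightarrow> real"
  assumes "h \<in> borel_measurable borel" "A \<in> sets borel" and "\<And>t. 0 \<le> h t"
  shows "set_lebesgue_integral (density lborel (\<lambda>t. ennreal (h t))) A (\<lambda>t. t)
     = (\<integral>t. indicator A t * (t * h t) \<partial>lborel)"
  unfolding set_lebesgue_integral_def
  using assms by (subst integral_density) (auto simp: mult_ac)

section \<open>The standard normal distribution\<close>

lemma phi_pos: "0 < phi u"
  unfolding phi_def by (rule normal_density_pos) simp

lemma phi_minus: "phi (- u) = phi u"
  by (simp add: phi_def std_normal_density_def)

lemma phi_eq_exp: "phi u = phi 0 * exp (- u\<^sup>2 / 2)"
  by (simp add: phi_def std_normal_density_def)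

lemma phi_le_phi_zero: "phi u \<le> phi 0"
  using phi_eq_exp[of u] phi_pos[of 0] by (simp add: mult_left_le)

lemma phi_zero_squared: "(phi 0)\<^sup>2 = 1 / (2 * pi)"
  by (simp add: phi_def std_normal_density_def power_divide)

lemma phi_has_real_derivative: "(phi has_real_derivative - x * phi x) (at x)"
  unfolding phi_def[abs_def] std_normal_density_def
  by (auto intro!: derivative_eq_intros simp: field_simps power2_eq_square)

lemma phi_at_top: "(phi \<longlongrightarrow> 0) at_top"
  unfolding phi_def[abs_def] std_normal_density_def by real_asymp

lemma Phi_eq_integral: "Phi u = (\<integral>t. indicator {..u} t * std_normal_density t \<partial>lborel)"
  unfolding Phi_def by (rule measure_density_eq_integral_indicator) auto

lemma integrable_std_normal_density: "integrable lborel std_normal_density"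
  by (rule integrable_normal_density) simp

lemma continuous_on_normal_density: "s \<noteq> 0 \<Longrightarrow> continuous_on UNIV (normal_density m s)"
  unfolding normal_density_def by (intro continuous_intros) simp

lemma Phi_has_real_derivative: "(Phi has_real_derivative phi x) (at x)"
  using has_real_derivative_integral_atMost
      [OF continuous_on_normal_density integrable_std_normal_density]
  by (simp add: Phi_eq_integral[abs_def] phi_def)

lemma Phi_at_top: "(Phi \<longlongrightarrow> 1) at_top"
  using tendsto_integral_at_top[OF sets_lborel integrable_std_normal_density]
  unfolding Phi_eq_integral[abs_def] by simp

lemma Phi_at_bot: "(Phi \<longlongrightarrow> 0) at_bot"
  using tendsto_integral_atMost_at_bot[OF integrable_std_normal_density]
  unfolding Phi_eq_integral[abs_def] by simp

lemma DERIV_Phi_comp [derivative_intros]: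
  "(f has_real_derivative f') (at x) \<Longrightarrow>
    ((\<lambda>x. Phi (f x)) has_real_derivative phi (f x) * f') (at x)"
  by (rule DERIV_chain2[OF Phi_has_real_derivative])

lemma DERIV_phi_comp [derivative_intros]:
  "(f has_real_derivative f') (at x) \<Longrightarrow>
    ((\<lambda>x. phi (f x)) has_real_derivative - f x * phi (f x) * f') (at x)"
  by (rule DERIV_chain2[OF phi_has_real_derivative])

lemma Phi_minus: "Phi (- u) = 1 - Phi u"
proof -
  have "((\<lambda>u. Phi u + Phi (- u)) has_real_derivative 0) (at x)" for x
    by (auto intro!: derivative_eq_intros simp: phi_minus)
  then have "(\<lambda>z. Phi z + Phi (- z)) = (\<lambda>_. Phi u + Phi (- u))"
    using DERIV_isconst_all[of "\<lambda>u. Phi u + Phi (- u)"] by blast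
  moreover have "((\<lambda>z. Phi z + Phi (- z)) \<longlongrightarrow> 1 + 0) at_top"
    by (intro tendsto_add Phi_at_top
        filterlim_compose[OF Phi_at_bot filterlim_uminus_at_bot_at_top])
  ultimately have "((\<lambda>z::real. Phi u + Phi (- u)) \<longlongrightarrow> 1) at_top"
    by simp
  then show ?thesis
    by (simp add: tendsto_const_iff)
qed

lemma Phi_zero: "Phi 0 = 1 / 2"
  using Phi_minus[of 0] by simp

lemma Phi_strict_mono: "a < b \<Longrightarrow> Phi a < Phi b"
  using DERIV_pos_imp_increasing Phi_has_real_derivative phi_pos by blast

lemma Phi_pos: "0 < Phi u"
proof -
  have "0 \<le> Phi (u - 1)"
    by (simp add: Phi_def)
  then show ?thesis
    using Phi_strict_mono[of "u - 1" u] by linarith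
qed

lemma Phi_less_one: "Phi u < 1"
  using Phi_pos[of "- u"] by (simp add: Phi_minus)

lemma Phi_ge_half: "0 \<le> y \<Longrightarrow> 1 / 2 \<le> Phi y"
  using Phi_strict_mono[of 0 y] by (cases "y = 0") (auto simp: Phi_zero)

lemma Phi_minus_half_le:
  assumes "0 \<le> y"
  shows "Phi y - 1 / 2 \<le> phi 0 * y"
proof (cases "y = 0")
  case False
  with assms obtain z where "Phi y - Phi 0 = (y - 0) * phi z"
    using MVT2[of 0 y Phi phi] Phi_has_real_derivative by force
  then have "Phi y - 1 / 2 = y * phi z"
    by (simp add: Phi_zero)
  also have "\<dots> \<le> y * phi 0"
    using phi_le_phi_zero assms by (rule mult_left_mono)
  finally show ?thesis
    by (simp add: mult.commute)
qed (simp add: Phi_zero)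

lemma normal_density_eq_phi: "0 < s \<Longrightarrow> normal_density m s t = phi ((t - m) / s) / s"
  unfolding normal_density_def phi_def
  by (simp add: real_sqrt_mult power_divide field_simps)

lemma integrable_normal_first_moment: "0 < s \<Longrightarrow> integrable lborel (\<lambda>t. t * normal_density m s t)"
  using integrable_normal_moment_nz_1 by (simp add: mult.commute)

lemma integral_normal_first_moment: "0 < s \<Longrightarrow> (\<integral>t. t * normal_density m s t \<partial>lborel) = m"
  using integral_normal_moment_nz_1 by (simp add: mult.commute)

lemma integral_atMost_normal_density:
  assumes s: "0 < s"
  shows "(\<integral>t. indicator {..y} t * normal_density m s t \<partial>lborel) = Phi ((y - m) / s)"
proof (rule integral_atMost_eq_antiderivative)
  show "continuous_on UNIV (normal_density m s)"
    using s by (simp add: continuous_on_normal_density)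
  show "((\<lambda>y. Phi ((y - m) / s)) has_real_derivative normal_density m s x) (at x)" for x
    using s by (auto intro!: derivative_eq_intros simp: normal_density_eq_phi)
  have "filterlim (\<lambda>y. (y - m) / s) at_top at_top"
    using s by real_asymp
  from filterlim_compose[OF Phi_at_top this]
  show "((\<lambda>y. Phi ((y - m) / s)) \<longlongrightarrow> (\<integral>t. normal_density m s t \<partial>lborel)) at_top"
    using integral_normal_density[OF s] by simp
qed (use s in simp)

lemma integral_atMost_normal_first_moment:
  assumes s: "0 < s"
  shows "(\<integral>t. indicator {..y} t * (t * normal_density m s t) \<partial>lborel)
    = m * Phi ((y - m) / s) - s * phi ((y - m) / s)"
proof (rule integral_atMost_eq_antiderivative)
  show "continuous_on UNIV (\<lambda>t. t * normal_density m s t)"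
    using s by (intro continuous_intros continuous_on_normal_density) simp
  show "integrable lborel (\<lambda>t. t * normal_density m s t)"
    using s by (rule integrable_normal_first_moment)
  show "((\<lambda>y. m * Phi ((y - m) / s) - s * phi ((y - m) / s))
      has_real_derivative x * normal_density m s x) (at x)" for x
    using s by (auto intro!: derivative_eq_intros simp: normal_density_eq_phi field_simps)
  have "filterlim (\<lambda>y. (y - m) / s) at_top at_top"
    using s by real_asymp
  then have "((\<lambda>y. m * Phi ((y - m) / s) - s * phi ((y - m) / s)) \<longlongrightarrow> m * 1 - s * 0) at_top"
    by (intro tendsto_intros filterlim_compose[OF Phi_at_top] filterlim_compose[OF phi_at_top])
  then show "((\<lambda>y. m * Phi ((y - m) / s) - s * phi ((y - m) / s))
      \<longlongrightarrow> (\<integral>t. t * normal_density m s t \<partial>lborel)) at_top"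
    using integral_normal_first_moment[OF s] by simp
qed

lemma gaussian_mixture_truncated_moments:
  fixes p m1 m2 s th :: real
  assumes p: "0 \<le> p" "p \<le> 1" and s: "0 < s"
  defines "M \<equiv> density lborel
      (\<lambda>t. ennreal (p * normal_density m1 s t + (1 - p) * normal_density m2 s t))"
    and "z1 \<equiv> (th - m1) / s" and "z2 \<equiv> (th - m2) / s"
  shows "measure M {..<th} = p * Phi z1 + (1 - p) * Phi z2"
    and "measure M {th<..} = 1 - (p * Phi z1 + (1 - p) * Phi z2)"
    and "set_lebesgue_integral M {..<th} (\<lambda>t. t)
      = p * (m1 * Phi z1 - s * phi z1) + (1 - p) * (m2 * Phi z2 - s * phi z2)"
    and "set_lebesgue_integral M {th<..} (\<lambda>t. t)
      = (p * m1 + (1 - p) * m2)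
        - (p * (m1 * Phi z1 - s * phi z1) + (1 - p) * (m2 * Phi z2 - s * phi z2))"
proof -
  define h where "h = (\<lambda>t. p * normal_density m1 s t + (1 - p) * normal_density m2 s t)"
  have M_eq: "M = density lborel (\<lambda>t. ennreal (h t))"
    by (simp add: M_def h_def)
  have h_measurable [measurable]: "h \<in> borel_measurable borel"
    unfolding h_def by measurable
  have h_nonneg: "0 \<le> h t" for t
    using p by (simp add: h_def)
  have linear: "(\<integral>t. indicator A t * (p * f1 t + (1 - p) * f2 t) \<partial>lborel)
      = p * (\<integral>t. indicator A t * f1 t \<partial>lborel) + (1 - p) * (\<integral>t. indicator A t * f2 t \<partial>lborel)"
    if "integrable lborel f1" "integrable lborel f2" "A \<in> sets borel"
    for A and f1 f2 :: "real \<Rightarrow> real"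
    using that integrable_mult_indicator[OF _ that(1)] integrable_mult_indicator[OF _ that(2)]
    by (simp add: distrib_left mult.left_commute[of "indicator A _"])
  have moment_integrable: "integrable lborel (\<lambda>t. t * normal_density m s t)" for m
    using s by (rule integrable_normal_first_moment)
  have t_h: "t * h t = p * (t * normal_density m1 s t) + (1 - p) * (t * normal_density m2 s t)"
    for t
    by (simp add: h_def algebra_simps)
  have h_integrable: "integrable lborel h"
    using s by (simp add: h_def)
  have t_h_integrable: "integrable lborel (\<lambda>t. t * h t)"
    by (simp add: t_h moment_integrable)
  have mass: "(\<integral>t. indicator {..th} t * h t \<partial>lborel) = p * Phi z1 + (1 - p) * Phi z2"
    using linear[of "normal_density m1 s" "normal_density m2 s" "{..th}"] s
    by (simp add: h_def integral_atMost_normal_density s z1_def z2_def)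
  have total_mass: "(\<integral>t. h t \<partial>lborel) = 1"
    using linear[of "normal_density m1 s" "normal_density m2 s" UNIV] s by (simp add: h_def)
  have moment: "(\<integral>t. indicator {..th} t * (t * h t) \<partial>lborel)
      = p * (m1 * Phi z1 - s * phi z1) + (1 - p) * (m2 * Phi z2 - s * phi z2)"
    using linear[OF moment_integrable moment_integrable, of "{..th}" m1 m2]
    by (simp add: t_h integral_atMost_normal_first_moment s z1_def z2_def)
  have total_moment: "(\<integral>t. t * h t \<partial>lborel) = p * m1 + (1 - p) * m2"
    using linear[OF moment_integrable moment_integrable, of UNIV m1 m2]
    by (simp add: t_h integral_normal_first_moment s)
  show "measure M {..<th} = p * Phi z1 + (1 - p) * Phi z2"
    by (simp add: M_eq measure_density_eq_integral_indicator h_nonneg h_integrable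
        integral_lessThan_eq_integral_atMost mass)
  show "measure M {th<..} = 1 - (p * Phi z1 + (1 - p) * Phi z2)"
    by (simp add: M_eq measure_density_eq_integral_indicator h_nonneg h_integrable
        integral_greaterThan_eq_diff_integral_atMost mass total_mass)
  show "set_lebesgue_integral M {..<th} (\<lambda>t. t)
      = p * (m1 * Phi z1 - s * phi z1) + (1 - p) * (m2 * Phi z2 - s * phi z2)"
    by (simp add: M_eq set_integral_ident_density h_nonneg integral_lessThan_eq_integral_atMost
        moment)
  show "set_lebesgue_integral M {th<..} (\<lambda>t. t)
      = (p * m1 + (1 - p) * m2)
        - (p * (m1 * Phi z1 - s * phi z1) + (1 - p) * (m2 * Phi z2 - s * phi z2))"
    by (simp add: M_eq set_integral_ident_density h_nonneg t_h_integrable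
        integral_greaterThan_eq_diff_integral_atMost moment total_moment)
qed

section \<open>The Gaussian mixture and the map g\<close>

lemma pi_plus_bounds: "0 < pi_plus m1 m2 s th" "pi_plus m1 m2 s th < 1"
  unfolding pi_plus_def Let_def by (auto simp: divide_simps add_pos_pos)

lemma pi_plus_theta_star: "pi_plus m1 m2 s (theta_star m1 m2) = 1 / 2"
  by (simp add: pi_plus_def)

lemma pi_plus_has_real_derivative_theta_star:
  assumes "0 < s"
  shows "(pi_plus m1 m2 s has_real_derivative (m2 - m1) / (4 * s\<^sup>2)) (at (theta_star m1 m2))"
  unfolding pi_plus_def[abs_def] Let_def
  using assms by (auto intro!: derivative_eq_intros simp: power2_eq_square field_simps add_pos_pos)

text \<open>
  Closed forms of Q_theta {X < theta}, of the Q_theta-integral of X over {X < theta} and of the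
  mean of Q_theta, see gaussian_mixture_truncated_moments.
\<close>

definition left_mass :: "real \<Rightarrow> real \<Rightarrow> real \<Rightarrow> real \<Rightarrow> real" where
  "left_mass m1 m2 s th = pi_plus m1 m2 s th * Phi ((th - m1) / s)
     + (1 - pi_plus m1 m2 s th) * Phi ((th - m2) / s)"

definition left_moment :: "real \<Rightarrow> real \<Rightarrow> real \<Rightarrow> real \<Rightarrow> real" where
  "left_moment m1 m2 s th
     = pi_plus m1 m2 s th * (m1 * Phi ((th - m1) / s) - s * phi ((th - m1) / s))
     + (1 - pi_plus m1 m2 s th) * (m2 * Phi ((th - m2) / s) - s * phi ((th - m2) / s))"

definition mixture_mean :: "real \<Rightarrow> real \<Rightarrow> real \<Rightarrow> real \<Rightarrow> real" where
  "mixture_mean m1 m2 s th = pi_plus m1 m2 s th * m1 + (1 - pi_plus m1 m2 s th) * m2"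

lemma g_eq_left_mass_left_moment:
  assumes "0 < s"
  shows "g m1 m2 s th = (left_moment m1 m2 s th / left_mass m1 m2 s th
     + (mixture_mean m1 m2 s th - left_moment m1 m2 s th) / (1 - left_mass m1 m2 s th)) / 2"
proof -
  let ?p = "pi_plus m1 m2 s th"
  have "Q m1 m2 s th
      = density lborel
          (\<lambda>t. ennreal (?p * normal_density m1 s t + (1 - ?p) * normal_density m2 s t))"
    by (simp add: Q_def pi_minus_def)
  then show ?thesis
    using gaussian_mixture_truncated_moments[of ?p s m1 m2 th] pi_plus_bounds[of m1 m2 s th] assms
    by (simp add: g_def muL_def muR_def left_mass_def left_moment_def mixture_mean_def)
qed

text \<open>Because M a = 1/2, the contributions of L' through L/M and through (E - L)/(1 - M) cancel.\<close>

lemma has_real_derivative_midpoint_conditional_means: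
  assumes "(M has_real_derivative M') (at a)" "(L has_real_derivative L') (at a)"
    and "(E has_real_derivative E') (at a)" and "M a = 1 / 2"
  shows "((\<lambda>th. (L th / M th + (E th - L th) / (1 - M th)) / 2)
    has_real_derivative E' + 2 * (E a - 2 * L a) * M') (at a)"
  using assms(1-3) by (auto intro!: derivative_eq_intros simp: assms(4) field_simps)

lemma theta_star_standardized:
  assumes "0 < s"
  shows "(theta_star m1 m2 - m1) / s = (m2 - m1) / (2 * s)"
    and "(theta_star m1 m2 - m2) / s = - ((m2 - m1) / (2 * s))"
  using assms by (simp_all add: theta_star_def field_simps)

lemma left_mass_theta_star:
  assumes "0 < s"
  shows "left_mass m1 m2 s (theta_star m1 m2) = 1 / 2"
  by (simp add: left_mass_def pi_plus_theta_star theta_star_standardized[OF assms] Phi_minus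
      field_simps)

lemma left_moment_theta_star:
  fixes m1 m2 s :: real
  assumes "0 < s"
  defines "x \<equiv> (m2 - m1) / (2 * s)"
  shows "left_moment m1 m2 s (theta_star m1 m2)
    = (theta_star m1 m2 - s * (x * (2 * Phi x - 1) + 2 * phi x)) / 2"
  unfolding left_moment_def pi_plus_theta_star theta_star_standardized[OF assms(1)] x_def[symmetric]
  using assms by (simp add: Phi_minus phi_minus x_def theta_star_def field_simps)

lemma mixture_mean_theta_star: "mixture_mean m1 m2 s (theta_star m1 m2) = theta_star m1 m2"
  unfolding mixture_mean_def pi_plus_theta_star by (simp add: theta_star_def)

lemma g_theta_star:
  assumes "0 < s"
  shows "g m1 m2 s (theta_star m1 m2) = theta_star m1 m2"
  using assms by (simp add: g_eq_left_mass_left_moment left_mass_theta_star mixture_mean_theta_star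
      field_simps)

lemma moments_has_real_derivative_theta_star:
  fixes m1 m2 s :: real
  assumes s: "0 < s"
  defines "ts \<equiv> theta_star m1 m2" and "x \<equiv> (m2 - m1) / (2 * s)"
  shows "(left_mass m1 m2 s has_real_derivative (x * (2 * Phi x - 1) / 2 + phi x) / s) (at ts)"
    and "(left_moment m1 m2 s has_real_derivative
      x * (m1 * Phi x - m2 * (1 - Phi x)) / (2 * s) + (m1 + m2) * phi x / (2 * s)) (at ts)"
    and "(mixture_mean m1 m2 s has_real_derivative - x\<^sup>2) (at ts)"
proof -
  have z: "(ts - m1) / s = x" "(ts - m2) / s = - x"
    unfolding ts_def x_def by (rule theta_star_standardized[OF s])+
  have P: "pi_plus m1 m2 s ts = 1 / 2"
    by (simp add: ts_def pi_plus_theta_star)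
  have dP: "(pi_plus m1 m2 s has_real_derivative x / (2 * s)) (at ts)"
    using pi_plus_has_real_derivative_theta_star[OF s, of m1 m2] s
    by (simp add: ts_def x_def power2_eq_square field_simps)
  show "(left_mass m1 m2 s has_real_derivative (x * (2 * Phi x - 1) / 2 + phi x) / s) (at ts)"
    unfolding left_mass_def[abs_def]
    using s by (auto intro!: derivative_eq_intros dP simp: P z Phi_minus phi_minus field_simps)
  show "(left_moment m1 m2 s has_real_derivative
      x * (m1 * Phi x - m2 * (1 - Phi x)) / (2 * s) + (m1 + m2) * phi x / (2 * s)) (at ts)"
    unfolding left_moment_def[abs_def]
    using s by (auto intro!: derivative_eq_intros dP simp: P z Phi_minus phi_minus field_simps)
  show "(mixture_mean m1 m2 s has_real_derivative - x\<^sup>2) (at ts)"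
    unfolding mixture_mean_def[abs_def]
    using s by (auto intro!: derivative_eq_intros dP simp: x_def power2_eq_square field_simps)
qed

lemma g_has_real_derivative_theta_star:
  assumes s: "0 < s"
  shows "(g m1 m2 s has_real_derivative C ((m2 - m1) / (2 * s))) (at (theta_star m1 m2))"
proof -
  define ts where "ts = theta_star m1 m2"
  define x where "x = (m2 - m1) / (2 * s)"
  have "g m1 m2 s = (\<lambda>th. (left_moment m1 m2 s th / left_mass m1 m2 s th
      + (mixture_mean m1 m2 s th - left_moment m1 m2 s th) / (1 - left_mass m1 m2 s th)) / 2)"
    using g_eq_left_mass_left_moment[OF s] by auto
  then have "(g m1 m2 s has_real_derivative
      - x\<^sup>2 + 2 * (mixture_mean m1 m2 s ts - 2 * left_moment m1 m2 s ts)
        * ((x * (2 * Phi x - 1) / 2 + phi x) / s)) (at ts)"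
    using has_real_derivative_midpoint_conditional_means
        [OF moments_has_real_derivative_theta_star[OF s] left_mass_theta_star[OF s]]
    by (simp add: ts_def x_def)
  moreover have "- x\<^sup>2 + 2 * (mixture_mean m1 m2 s ts - 2 * left_moment m1 m2 s ts)
      * ((x * (2 * Phi x - 1) / 2 + phi x) / s) = C x"
    using s by (simp add: ts_def x_def mixture_mean_theta_star left_moment_theta_star C_def
        Phi_minus power2_eq_square field_simps)
  ultimately show ?thesis
    by (simp add: ts_def x_def)
qed

lemma phi_ge_upper_tail: "y * (1 - Phi y) \<le> phi y"
proof -
  have moment_integrable: "integrable lborel (\<lambda>t. t * std_normal_density t)"
    by (simp add: integrable_normal_first_moment)
  have "(\<integral>t. indicator {y<..} t * (t * std_normal_density t) \<partial>lborel) = phi y"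
    using integral_greaterThan_eq_diff_integral_atMost[OF moment_integrable, of y]
      integral_atMost_normal_first_moment[of 1 y 0] integral_normal_first_moment[of 1 0]
    by simp
  moreover have "(\<integral>t. indicator {y<..} t * std_normal_density t \<partial>lborel) = 1 - Phi y"
    using integral_greaterThan_eq_diff_integral_atMost[OF integrable_std_normal_density, of y]
      integral_atMost_normal_density[of 1 y 0]
    by simp
  ultimately have "phi y - y * (1 - Phi y)
      = (\<integral>t. indicator {y<..} t * (t * std_normal_density t)
          - y * (indicator {y<..} t * std_normal_density t) \<partial>lborel)"
    using integrable_mult_indicator[OF _ moment_integrable, of "{y<..}"]
      integrable_mult_indicator[OF _ integrable_std_normal_density, of "{y<..}"]
    by (simp add: Bochner_Integration.integral_diff)
  also have "\<dots> \<ge> 0"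
    by (intro integral_nonneg_AE) (auto split: split_indicator intro!: mult_right_mono)
  finally show ?thesis
    by simp
qed

lemma phi_gt_upper_tail: "y * (1 - Phi y) < phi y"
proof -
  have "((\<lambda>y. phi y - y * (1 - Phi y)) has_real_derivative - (1 - Phi y)) (at y)" for y
    by (auto intro!: derivative_eq_intros simp: algebra_simps)
  then have "phi (y + 1) - (y + 1) * (1 - Phi (y + 1)) < phi y - y * (1 - Phi y)"
    using Phi_less_one by (intro DERIV_neg_imp_decreasing[of y "y + 1"]) force+
  then show ?thesis
    using phi_ge_upper_tail[of "y + 1"] by linarith
qed

lemma Mills_ratio_lower_bound: "y * phi y \<le> (1 + y\<^sup>2) * (1 - Phi y)"
proof -
  define d where "d z = (1 + z\<^sup>2) * (1 - Phi z) - z * phi z" for z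
  have deriv: "(d has_real_derivative - 2 * (phi z - z * (1 - Phi z))) (at z)" for z
    unfolding d_def[abs_def]
    by (auto intro!: derivative_eq_intros simp: algebra_simps power2_eq_square)
  have antimono: "d z \<le> d y" if "y \<le> z" for z
  proof (rule DERIV_nonpos_imp_nonincreasing[OF that])
    fix t
    show "\<exists>D. (d has_real_derivative D) (at t) \<and> D \<le> 0"
      using phi_ge_upper_tail[of t] deriv[of t] by auto
  qed
  have "((\<lambda>z. (1 + z\<^sup>2) * (1 - Phi z)) \<longlongrightarrow> 0) at_top"
  proof (rule tendsto_sandwich)
    have "0 \<le> (1 + z\<^sup>2) * (1 - Phi z)" for z
      using Phi_less_one[of z] by (intro mult_nonneg_nonneg) simp_all
    then show "\<forall>\<^sub>F z in at_top. 0 \<le> (1 + z\<^sup>2) * (1 - Phi z)"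
      by (simp add: always_eventually)
    show "\<forall>\<^sub>F z in at_top. (1 + z\<^sup>2) * (1 - Phi z) \<le> (1 + z\<^sup>2) * phi z / z"
      using eventually_gt_at_top[of 0]
    proof eventually_elim
      case (elim z)
      then have "1 - Phi z \<le> phi z / z"
        using phi_ge_upper_tail[of z] by (simp add: field_simps)
      then show ?case
        using mult_left_mono[of "1 - Phi z" "phi z / z" "1 + z\<^sup>2"] by simp
    qed
    show "((\<lambda>z. (1 + z\<^sup>2) * phi z / z) \<longlongrightarrow> 0) at_top"
      unfolding phi_def[abs_def] std_normal_density_def by real_asymp
  qed simp
  moreover have "((\<lambda>z. z * phi z) \<longlongrightarrow> 0) at_top"
    unfolding phi_def[abs_def] std_normal_density_def by real_asymp
  ultimately have "(d \<longlongrightarrow> 0 - 0) at_top"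
    unfolding d_def[abs_def] by (rule tendsto_diff)
  moreover have "eventually (\<lambda>z. d z \<le> d y) at_top"
    using eventually_ge_at_top[of y] by (rule eventually_mono) (rule antimono)
  ultimately have "0 \<le> d y"
    using tendsto_upperbound trivial_limit_at_top_linorder by force
  then show ?thesis
    by (simp add: d_def)
qed

section \<open>The contraction rate C\<close>

lemma C_eq_upper_tail: "C y = (2 * phi y + 2 * y * Phi y) * (2 * phi y - 2 * y * (1 - Phi y))"
  by (simp add: C_def Phi_minus)

lemma C_expanded: "C x = 4 * ((phi x)\<^sup>2 + phi x * x * (2 * Phi x - 1) - x\<^sup>2 * Phi x * (1 - Phi x))"
  by (simp add: C_eq_upper_tail algebra_simps power2_eq_square)

lemma C_zero: "C 0 = 2 / pi"
  using phi_zero_squared by (simp add: C_eq_upper_tail power2_eq_square)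

lemma C_pos: "0 \<le> y \<Longrightarrow> 0 < C y"
  using phi_pos[of y] Phi_pos[of y] phi_gt_upper_tail[of y]
  by (simp add: C_eq_upper_tail add_pos_nonneg)

lemma C_has_real_derivative:
  "(C has_real_derivative 4 * (phi y * (2 * Phi y - 1) - 2 * y * Phi y * (1 - Phi y))) (at y)"
  unfolding C_eq_upper_tail[abs_def]
  by (auto intro!: derivative_eq_intros simp: algebra_simps)

lemma C_derivative_nonpos_near_zero:
  assumes y: "0 \<le> y" and small: "y\<^sup>2 \<le> 7 / 10"
  shows "phi y * (2 * Phi y - 1) \<le> 2 * y * Phi y * (1 - Phi y)"
proof -
  define P c E where "P = Phi y" and "c = phi 0" and "E = exp (- y\<^sup>2 / 2)"
  have c2: "c\<^sup>2 = 1 / (2 * pi)" and phi_y: "phi y = c * E"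
    by (simp_all add: c_def E_def phi_zero_squared phi_eq_exp[of y])
  have P: "0 \<le> P - 1 / 2" "P - 1 / 2 \<le> c * y"
    using Phi_ge_half[OF y] Phi_minus_half_le[OF y] by (simp_all add: P_def c_def)
  have "E * (1 + y\<^sup>2 / 2) \<le> E * exp (y\<^sup>2 / 2)"
    by (intro mult_left_mono exp_ge_add_one_self) (simp add: E_def)
  also have "\<dots> = 1"
    by (simp add: E_def flip: exp_add)
  finally have "E \<le> 1 / (1 + y\<^sup>2 / 2)"
    by (simp add: field_simps add_pos_nonneg)
  also have "\<dots> \<le> 3 / 2 - y\<^sup>2"
  proof -
    have "(y\<^sup>2)\<^sup>2 \<le> 7 / 10 * y\<^sup>2"
      using mult_right_mono[OF small, of "y\<^sup>2"] by (simp add: power2_eq_square)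
    then have "1 \<le> (3 / 2 - y\<^sup>2) * (1 + y\<^sup>2 / 2)"
      using small by (simp add: algebra_simps power2_eq_square)
    moreover have "0 < 1 + y\<^sup>2 / 2"
      by (simp add: add_pos_nonneg)
    ultimately show ?thesis
      by (simp only: pos_divide_le_eq)
  qed
  finally have E: "E \<le> pi / 2 - y\<^sup>2"
    using pi_gt3 by linarith
  have "phi y * (2 * P - 1) \<le> c * E * (2 * c * y)"
    using P phi_pos[of y] by (simp add: phi_y mult_left_mono)
  also have "\<dots> = y * E / pi"
    using c2 by (simp add: power2_eq_square field_simps)
  also have "\<dots> \<le> y * (pi / 2 - y\<^sup>2) / pi"
    using E y by (simp add: divide_right_mono mult_left_mono)
  also have "\<dots> = 2 * y * (1 / 4 - c\<^sup>2 * y\<^sup>2)"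
    using c2 by (simp add: field_simps)
  also have "\<dots> \<le> 2 * y * P * (1 - P)"
  proof -
    have "(P - 1 / 2)\<^sup>2 \<le> (c * y)\<^sup>2"
      using P by (intro power_mono) auto
    then have "1 / 4 - c\<^sup>2 * y\<^sup>2 \<le> P * (1 - P)"
      by (simp add: power2_eq_square algebra_simps)
    then show ?thesis
      using mult_left_mono[of _ _ "2 * y"] y by (simp add: mult.assoc)
  qed
  finally show ?thesis
    by (simp add: P_def)
qed

lemma C_derivative_nonpos_away_from_zero:
  assumes y: "0 \<le> y" and large: "7 / 10 \<le> y\<^sup>2"
  shows "phi y * (2 * Phi y - 1) \<le> 2 * y * Phi y * (1 - Phi y)"
proof -
  define P where "P = Phi y"
  have "(2 * phi 0)\<^sup>2 = 2 / pi"
    by (simp add: power_mult_distrib phi_zero_squared)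
  also have "\<dots> \<le> 7 / 10"
    using pi_gt3 by (simp add: divide_le_eq)
  finally have "(2 * phi 0)\<^sup>2 \<le> y\<^sup>2"
    using large by linarith
  then have "2 * phi 0 \<le> y"
    using y by (rule power2_le_imp_le)
  then have "2 * P - 1 \<le> y\<^sup>2"
    using Phi_minus_half_le[OF y] y mult_right_mono[of "2 * phi 0" y y]
    by (simp add: P_def power2_eq_square)
  then have "phi y * (2 * P - 1) * (1 + y\<^sup>2) \<le> 2 * y * P * (y * phi y)"
    using phi_pos[of y] mult_left_mono[of "(2 * P - 1) * (1 + y\<^sup>2)" "2 * y\<^sup>2 * P" "phi y"]
    by (simp add: algebra_simps power2_eq_square)
  also have "\<dots> \<le> 2 * y * P * ((1 + y\<^sup>2) * (1 - P))"
    using Mills_ratio_lower_bound[of y] y Phi_pos[of y]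
    by (intro mult_left_mono) (simp_all add: P_def)
  finally have "phi y * (2 * P - 1) * (1 + y\<^sup>2) \<le> 2 * y * P * (1 - P) * (1 + y\<^sup>2)"
    by (simp add: algebra_simps)
  moreover have "0 < 1 + y\<^sup>2"
    by (simp add: add_pos_nonneg)
  ultimately show ?thesis
    unfolding P_def by (rule mult_right_le_imp_le)
qed

lemma C_le_C_zero:
  assumes "0 \<le> y"
  shows "C y \<le> C 0"
proof (rule DERIV_nonpos_imp_nonincreasing[OF assms])
  fix t :: real
  assume "0 \<le> t"
  then have "phi t * (2 * Phi t - 1) \<le> 2 * t * Phi t * (1 - Phi t)"
    using C_derivative_nonpos_near_zero C_derivative_nonpos_away_from_zero by fastforce
  then show "\<exists>D. (C has_real_derivative D) (at t) \<and> D \<le> 0"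
    using C_has_real_derivative by fastforce
qed

lemma local_contraction_at_fixed_point:
  fixes f :: "real \<Rightarrow> real"
  assumes deriv: "(f has_real_derivative D) (at a)" and fixed: "f a = a" and less: "\<bar>D\<bar> < c"
  shows "\<exists>\<delta>>0. \<forall>t. \<bar>t - a\<bar> < \<delta> \<longrightarrow> \<bar>f t - a\<bar> \<le> c * \<bar>t - a\<bar>"
proof -
  have "((\<lambda>t. (f t - a) / (t - a)) \<longlongrightarrow> D) (at a)"
    using deriv fixed by (simp add: has_field_derivative_iff)
  then have "((\<lambda>t. \<bar>f t - a\<bar> / \<bar>t - a\<bar>) \<longlongrightarrow> \<bar>D\<bar>) (at a)"
    by (auto dest: tendsto_rabs)
  then have "eventually (\<lambda>t. \<bar>f t - a\<bar> / \<bar>t - a\<bar> < c) (at a)"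
    using less by (rule order_tendstoD)
  then obtain \<delta> where "\<delta> > 0" and \<delta>: "\<And>t. t \<noteq> a \<Longrightarrow> \<bar>t - a\<bar> < \<delta> \<Longrightarrow> \<bar>f t - a\<bar> / \<bar>t - a\<bar> < c"
    by (auto simp: eventually_at dist_real_def)
  have "\<bar>f t - a\<bar> \<le> c * \<bar>t - a\<bar>" if "\<bar>t - a\<bar> < \<delta>" for t
  proof (cases "t = a")
    case False
    then show ?thesis
      using \<delta>[OF False that] by (simp add: divide_less_eq)
  qed (simp add: fixed)
  with \<open>\<delta> > 0\<close> show ?thesis
    by blast
qed

theorem proposition1:
  fixes mu1 mu2 sg :: real
  assumes "mu1 < mu2" and "sg > 0"
  defines "ts \<equiv> theta_star mu1 mu2"
    and "x \<equiv> (mu2 - mu1) / (2 * sg)"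
  shows "g mu1 mu2 sg ts = ts
    \<and> (g mu1 mu2 sg has_real_derivative C x) (at ts)
    \<and> C x = 4 * ((phi x)\<^sup>2 + phi x * x * (2 * Phi x - 1) - x\<^sup>2 * Phi x * (1 - Phi x))
    \<and> (\<forall>y::real. y \<ge> 0 \<longrightarrow> 0 < C y \<and> C y \<le> 2 / pi)
    \<and> C 0 = 2 / pi \<and> 2 / pi < 1
    \<and> (\<forall>c. 2 / pi < c \<and> c < 1 \<longrightarrow>
         (\<exists>\<delta>>0. \<forall>theta. \<bar>theta - ts\<bar> < \<delta> \<longrightarrow>
            \<bar>g mu1 mu2 sg theta - ts\<bar> \<le> c * \<bar>theta - ts\<bar>))"
proof -
  have fixed: "g mu1 mu2 sg ts = ts"
    using g_theta_star[OF assms(2)] by (simp add: ts_def)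
  have deriv: "(g mu1 mu2 sg has_real_derivative C x) (at ts)"
    using g_has_real_derivative_theta_star[OF assms(2)] by (simp add: ts_def x_def)
  have C_bounds: "0 < C y \<and> C y \<le> 2 / pi" if "0 \<le> y" for y
    using C_pos[OF that] C_le_C_zero[OF that] by (simp add: C_zero)
  have "0 \<le> x"
    using assms(1,2) by (simp add: x_def)
  then have "\<bar>C x\<bar> < c" if "2 / pi < c" for c
    using C_bounds[of x] that by simp
  then show ?thesis
    using fixed deriv C_expanded C_bounds C_zero pi_gt3
      local_contraction_at_fixed_point[OF deriv fixed]
    by auto
qed

end
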